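(* Let $(S_n,X_n)_{n\ge0}$ be an alternating non-homogeneous semi-Markov process with $S_0=1$, $X_0=0$, semi-Markov kernels $G_Y,G_Z$, with $X_n\to\infty$ almost surely, cycle-counting process $N(t)$ and renewal function $M$. Define the age and excess with respect to the $Y$-phase by $$A(t)=(t-X_{2N(t)})\,\mathbf 1\{X_{2N(t)+1}>t\},\qquad B(t)=(X_{2N(t)+1}-t)\,\mathbf 1\{X_{2N(t)+1}>t\}.$$ Then for all $t\ge0$, $0\le x\le t$ and $z\ge0$, $$\mathbb P(A(t)\le x,B(t)\le z)=G_Y(0,t)-\int_{t-x}^{t}[1-G_Y(s,t+z-s)]\,dM(s)-\int_0^{t-x}[1-G_Y(s,t-s)]\,dM(s)+\mathbf 1\{x=t\}\,[G_Y(0,t+z)-G_Y(0,t)].$$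
   Context: Let $(S_n,X_n)_{n\ge0}$ be random variables on a probability space with $S_n\in\{0,1\}$, $0=X_0\le X_1\le X_2\le\cdots$, $S_0=1$, and alternating states: $S_n=1$ for even $n$ and $S_n=0$ for odd $n$. Write $T_{n+1}=X_{n+1}-X_n$. The process is called an alternating non-homogeneous semi-Markov process with semi-Markov kernels $G_Y,G_Z$ if for every $n\ge 0$ the conditional distribution of $T_{n+1}$ given $(S_0,X_0),\dots,(S_n,X_n)$ depends only on $(S_n,X_n)$ (and not on $n$), with $\mathbb P(T_{n+1}\le \tau\mid S_n=1,X_n=x)=G_Y(x,\tau)$ and $\mathbb P(T_{n+1}\le\tau\mid S_n=0,X_n=x)=G_Z(x,\tau)$ for all $x,\tau\ge 0$; here for each $x\ge0$, $G_Y(x,\cdot)$ and $G_Z(x,\cdot)$ are distribution functions on $[0,\infty)$, jointly measurable in $(x,\tau)$, absolutely continuous with densities $g_Y(x,\cdot)$, $g_Z(x,\cdot)$. Periods in state $1$ are $Y$-phases and periods in state $0$ are $Z$-phases. The cycle-counting process is $N(t)=\sup\{n\in\mathbb N_0: X_{2n}\le t\}$ and the renewal function is $M(t)=\mathbb E N(t)=\sum_{n=1}^\infty \mathbb P(X_{2n}\le t)$, $t\ge0$; integrals $dM(s)$ are Lebesgue–Stieltjes integrals with respect to $M$. *)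

theory Defs
  imports "HOL-Probability.Probability"
begin

text \<open>sigma-algebra generated by X_0, ..., X_n (the history up to step n; the states
  S_k are deterministic, S_k = 1 iff k even, so they generate nothing extra).\<close>
definition history :: "'a measure \<Rightarrow> (nat \<Rightarrow> 'a \<Rightarrow> real) \<Rightarrow> nat \<Rightarrow> 'a measure" where
  "history P X n = sigma (space P) {X i -` B \<inter> space P | i B. i \<le> n \<and> B \<in> sets borel}"

definition cyc_count :: "(nat \<Rightarrow> 'a \<Rightarrow> real) \<Rightarrow> real \<Rightarrow> 'a \<Rightarrow> nat" where
  "cyc_count X t \<omega> = Sup {n. X (2 * n) \<omega> \<le> t}"

definition age :: "(nat \<Rightarrow> 'a \<Rightarrow> real) \<Rightarrow> real \<Rightarrow> 'a \<Rightarrow> real" where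
  "age X t \<omega> = (t - X (2 * cyc_count X t \<omega>) \<omega>) *
      indicator {r. r > t} (X (2 * cyc_count X t \<omega> + 1) \<omega>)"

definition excess :: "(nat \<Rightarrow> 'a \<Rightarrow> real) \<Rightarrow> real \<Rightarrow> 'a \<Rightarrow> real" where
  "excess X t \<omega> = (X (2 * cyc_count X t \<omega> + 1) \<omega> - t) *
      indicator {r. r > t} (X (2 * cyc_count X t \<omega> + 1) \<omega>)"

definition renewal_fun :: "'a measure \<Rightarrow> (nat \<Rightarrow> 'a \<Rightarrow> real) \<Rightarrow> real \<Rightarrow> ennreal" where
  "renewal_fun P X t = (\<Sum>n. emeasure P {\<omega> \<in> space P. X (2 * Suc n) \<omega> \<le> t})"

text \<open>The Lebesgue--Stieltjes measure dM of the renewal function: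
  dM(A) = sum_{n>=1} P(X_{2n} \<in> A); its distribution function is renewal_fun,
  i.e. dM({..t}) = M(t).\<close>
definition renewal_measure :: "'a measure \<Rightarrow> (nat \<Rightarrow> 'a \<Rightarrow> real) \<Rightarrow> real measure" where
  "renewal_measure P X = measure_of UNIV (sets borel)
      (\<lambda>A. \<Sum>n. emeasure P {\<omega> \<in> space P. X (2 * Suc n) \<omega> \<in> A})"

definition sm_kernel :: "(real \<Rightarrow> real \<Rightarrow> real) \<Rightarrow> (real \<Rightarrow> real \<Rightarrow> real) \<Rightarrow> bool" where
  "sm_kernel G g \<longleftrightarrow>
     (\<lambda>p. G (fst p) (snd p)) \<in> borel_measurable (restrict_space borel ({0..} \<times> {0..})) \<and>
     (\<forall>x\<ge>0. g x \<in> borel_measurable borel \<and> (\<forall>s\<ge>0. g x s \<ge> 0) \<and>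
        set_integrable lborel {0..} (g x) \<and> (\<integral>s\<in>{0..}. g x s \<partial>lborel) = 1 \<and>
        (\<forall>\<tau><0. G x \<tau> = 0) \<and>
        (\<forall>\<tau>\<ge>0. G x \<tau> = (\<integral>s\<in>{0..\<tau>}. g x s \<partial>lborel)))"

end

theory Submission
  imports Defs
begin

text \<open>Up to a null set, the event \<open>A(t) \<le> x, B(t) \<le> z\<close> is the complement of three disjoint
  events: the first \<open>Y\<close>-phase outlasts \<open>t\<close> (or \<open>t + z\<close> when \<open>x = t\<close>); some later cycle starts in
  \<open>(t - x, t]\<close> and its \<open>Y\<close>-phase outlasts \<open>t + z\<close>; some later cycle starts in \<open>[0, t - x]\<close> and its
  \<open>Y\<close>-phase outlasts \<open>t\<close>. By the semi-Markov property a \<open>Y\<close>-phase starting at \<open>X\<^sub>2\<^sub>n = s\<close> outlasts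
  \<open>c\<close> with conditional probability \<open>1 - G\<^sub>Y(s, c - s)\<close>, and summing over the cycles turns these
  expectations into integrals against \<open>dM\<close>.

  The hypothesis only controls deterministic durations \<open>\<tau>\<close>. It is transferred to the random
  threshold \<open>c - X\<^sub>n\<close> by freezing \<open>X\<^sub>n\<close> on finer and finer grids and using that \<open>G(x, \<cdot>)\<close> is
  continuous; the same squeeze shows that the \<open>X\<^sub>n\<close> have no atoms, which accounts for the null set.\<close>

lemma sm_kernel_eq_integral:
  assumes "sm_kernel G g" and "x \<ge> 0"
  shows "G x \<tau> = (LINT s|lborel. indicator {0..\<tau>} s * g x s)"
proof (cases "\<tau> \<ge> 0")
  case True
  then show ?thesis using assms by (simp add: sm_kernel_def set_lebesgue_integral_def)
next
  case False
  then show ?thesis using assms by (simp add: sm_kernel_def)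
qed

lemma sm_kernel_integrable:
  assumes "sm_kernel G g" and "x \<ge> 0" and "I \<subseteq> {0..}" and "I \<in> sets borel"
  shows "integrable lborel (\<lambda>s. indicator I s * g x s)"
proof -
  have "set_integrable lborel {0..} (g x)" using assms by (simp add: sm_kernel_def)
  then have "set_integrable lborel I (g x)"
    by (rule set_integrable_subset) (use assms in auto)
  then show ?thesis by (simp add: set_integrable_def)
qed

lemma sm_kernel_le_integral:
  assumes k: "sm_kernel G g" and x: "x \<ge> 0" and I: "{0..\<tau>} \<subseteq> I" "I \<subseteq> {0..}" "I \<in> sets borel"
  shows "G x \<tau> \<le> (LINT s|lborel. indicator I s * g x s)"
  unfolding sm_kernel_eq_integral[OF k x]
proof (intro integral_mono sm_kernel_integrable[OF k x] I)
  fix s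
  have "s \<ge> 0 \<Longrightarrow> g x s \<ge> 0" using k x by (simp add: sm_kernel_def)
  then show "indicator {0..\<tau>} s * g x s \<le> indicator I s * g x s"
    using I by (auto simp: indicator_def)
qed auto

lemma sm_kernel_mono:
  assumes "sm_kernel G g" and "x \<ge> 0" and "\<tau> \<le> \<tau>'"
  shows "G x \<tau> \<le> G x \<tau>'"
  using sm_kernel_le_integral[OF assms(1,2), of \<tau> "{0..\<tau>'}"] assms(3)
  by (simp add: sm_kernel_eq_integral[OF assms(1,2), of \<tau>'])

lemma sm_kernel_le_1:
  assumes "sm_kernel G g" and "x \<ge> 0"
  shows "G x \<tau> \<le> 1"
  using sm_kernel_le_integral[OF assms, of \<tau> "{0..}"] assms
  by (simp add: sm_kernel_def set_lebesgue_integral_def)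

lemma sm_kernel_eq_0:
  assumes k: "sm_kernel G g" and x: "x \<ge> 0" and "\<tau> \<le> 0"
  shows "G x \<tau> = 0"
proof (cases "\<tau> < 0")
  case True then show ?thesis using k x by (simp add: sm_kernel_def)
next
  case False
  have "AE s in lborel. indicator {0..\<tau>} s * g x s = 0"
    using AE_lborel_singleton[of 0]
    by eventually_elim (use False \<open>\<tau> \<le> 0\<close> in \<open>auto simp: indicator_def\<close>)
  then show ?thesis
    unfolding sm_kernel_eq_integral[OF k x] by (rule integral_eq_zero_AE)
qed

lemma sm_kernel_nonneg:
  assumes "sm_kernel G g" and "x \<ge> 0"
  shows "G x \<tau> \<ge> 0"
  using sm_kernel_mono[OF assms, of "min \<tau> 0" \<tau>] sm_kernel_eq_0[OF assms, of "min \<tau> 0"] by simp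

lemma tendsto_sm_kernel:
  assumes k: "sm_kernel G g" and x: "x \<ge> 0" and lim: "\<tau>s \<longlonglongrightarrow> \<tau>"
  shows "(\<lambda>i. G x (\<tau>s i)) \<longlonglongrightarrow> G x \<tau>"
  unfolding sm_kernel_eq_integral[OF k x]
proof (rule integral_dominated_convergence)
  have gm: "g x \<in> borel_measurable borel" using k x by (simp add: sm_kernel_def)
  then show "(\<lambda>s. indicator {0..\<tau>} s * g x s) \<in> borel_measurable lborel"
    "\<And>i. (\<lambda>s. indicator {0..\<tau>s i} s * g x s) \<in> borel_measurable lborel"
    by simp_all
  show "integrable lborel (\<lambda>s. norm (indicator {0..} s * g x s))"
    using sm_kernel_integrable[OF k x] by simp
  show "AE s in lborel. norm (indicator {0..\<tau>s i} s * g x s) \<le> norm (indicator {0..} s * g x s)" for i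
    by (auto simp: indicator_def)
  show "AE s in lborel. (\<lambda>i. indicator {0..\<tau>s i} s * g x s) \<longlonglongrightarrow> indicator {0..\<tau>} s * g x s"
    using AE_lborel_singleton[of \<tau>]
  proof eventually_elim
    case (elim s)
    have "\<forall>\<^sub>F i in sequentially. indicator {0..\<tau>s i} s = (indicator {0..\<tau>} s :: real)"
    proof (cases "s < \<tau>")
      case True
      show ?thesis using order_tendstoD(1)[OF lim True]
        by eventually_elim (use True in \<open>auto simp: indicator_def\<close>)
    next
      case False
      with elim have "\<tau> < s" by simp
      show ?thesis using order_tendstoD(2)[OF lim \<open>\<tau> < s\<close>]
        by eventually_elim (use \<open>\<tau> < s\<close> in \<open>auto simp: indicator_def\<close>)
    qed
    then show ?case by (rule tendsto_eventually[OF eventually_mono]) simp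
  qed
qed

lemma measurable_sm_kernel:
  assumes k: "sm_kernel G g" and a: "a \<in> borel_measurable M" and b: "b \<in> borel_measurable M"
    and a_nonneg: "\<And>\<omega>. \<omega> \<in> space M \<Longrightarrow> a \<omega> \<ge> 0"
  shows "(\<lambda>\<omega>. G (a \<omega>) (b \<omega>)) \<in> borel_measurable M"
proof -
  have G: "(\<lambda>p. G (fst p) (snd p)) \<in> borel_measurable (restrict_space borel ({0..} \<times> {0..}))"
    using k by (simp add: sm_kernel_def)
  have "(\<lambda>\<omega>. (a \<omega>, max (b \<omega>) 0)) \<in> measurable M (borel \<Otimes>\<^sub>M borel)"
    using a b by measurable
  then have "(\<lambda>\<omega>. (a \<omega>, max (b \<omega>) 0)) \<in> measurable M (restrict_space borel ({0..} \<times> {0..}))"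
    by (intro measurable_restrict_space2) (auto simp: a_nonneg borel_prod)
  from measurable_comp[OF this G]
  have "(\<lambda>\<omega>. G (a \<omega>) (max (b \<omega>) 0)) \<in> borel_measurable M" by (simp add: comp_def)
  moreover have "G (a \<omega>) (max (b \<omega>) 0) = G (a \<omega>) (b \<omega>)" if "\<omega> \<in> space M" for \<omega>
    using sm_kernel_eq_0[OF k a_nonneg[OF that]] by (auto simp: max_def)
  ultimately show ?thesis by (rule measurable_cong[THEN iffD1, rotated])
qed

lemma tendsto_nn_integral_sm_kernel:
  assumes k: "sm_kernel G g" and "finite_measure M" and A: "A \<in> sets M"
    and Y: "Y \<in> borel_measurable M" "\<And>\<omega>. \<omega> \<in> space M \<Longrightarrow> Y \<omega> \<ge> 0"
    and \<tau>: "\<And>i. \<tau>s i \<in> borel_measurable M" "\<tau> \<in> borel_measurable M"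
    and lim: "\<And>\<omega>. \<omega> \<in> space M \<Longrightarrow> (\<lambda>i. \<tau>s i \<omega>) \<longlonglongrightarrow> \<tau> \<omega>"
  shows "(\<lambda>i. \<integral>\<^sup>+\<omega>. indicator A \<omega> * ennreal (G (Y \<omega>) (\<tau>s i \<omega>)) \<partial>M)
    \<longlonglongrightarrow> (\<integral>\<^sup>+\<omega>. indicator A \<omega> * ennreal (G (Y \<omega>) (\<tau> \<omega>)) \<partial>M)"
proof (rule nn_integral_dominated_convergence[where w="\<lambda>_. 1"])
  show "(\<lambda>\<omega>. indicator A \<omega> * ennreal (G (Y \<omega>) (\<tau>s i \<omega>))) \<in> borel_measurable M" for i
    using measurable_sm_kernel[OF k Y(1) \<tau>(1) Y(2)] A by measurable
  show "(\<lambda>\<omega>. indicator A \<omega> * ennreal (G (Y \<omega>) (\<tau> \<omega>))) \<in> borel_measurable M"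
    using measurable_sm_kernel[OF k Y(1) \<tau>(2) Y(2)] A by measurable
  show "(\<integral>\<^sup>+\<omega>. 1 \<partial>M) < \<infinity>"
    using finite_measure.emeasure_finite[OF \<open>finite_measure M\<close>, of "space M"]
    by (simp add: less_top[symmetric])
  show "AE \<omega> in M. indicator A \<omega> * ennreal (G (Y \<omega>) (\<tau>s i \<omega>)) \<le> 1" for i
    using sm_kernel_le_1[OF k Y(2)] by (intro AE_I2) (auto simp: indicator_def)
  show "AE \<omega> in M. (\<lambda>i. indicator A \<omega> * ennreal (G (Y \<omega>) (\<tau>s i \<omega>)))
      \<longlonglongrightarrow> indicator A \<omega> * ennreal (G (Y \<omega>) (\<tau> \<omega>))"
  proof (rule AE_I2)
    fix \<omega> assume "\<omega> \<in> space M"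
    then show "(\<lambda>i. indicator A \<omega> * ennreal (G (Y \<omega>) (\<tau>s i \<omega>)))
      \<longlonglongrightarrow> indicator A \<omega> * ennreal (G (Y \<omega>) (\<tau> \<omega>))"
      by (cases "\<omega> \<in> A") (auto intro!: tendsto_ennrealI tendsto_sm_kernel[OF k Y(2)] lim)
  qed
qed simp

definition grid_index :: "nat \<Rightarrow> real \<Rightarrow> nat" where
  "grid_index k y = nat \<lfloor>real (Suc k) * y\<rfloor>"

lemma grid_index_iff:
  assumes "y \<ge> 0"
  shows "real j / real (Suc k) \<le> y \<and> y < real (Suc j) / real (Suc k) \<longleftrightarrow> j = grid_index k y"
proof -
  have "real j / real (Suc k) \<le> y \<and> y < real (Suc j) / real (Suc k) \<longleftrightarrow>
      real j \<le> real (Suc k) * y \<and> real (Suc k) * y < real j + 1"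
    by (simp add: divide_le_eq less_divide_eq mult.commute add.commute)
  also have "\<dots> \<longleftrightarrow> \<lfloor>real (Suc k) * y\<rfloor> = int j"
    by (simp add: floor_eq_iff)
  also have "\<dots> \<longleftrightarrow> j = grid_index k y"
    using assms by (auto simp: grid_index_def)
  finally show ?thesis .
qed

lemma tendsto_grid_index:
  assumes "y \<ge> 0"
  shows "(\<lambda>k. real (grid_index k y) / real (Suc k)) \<longlonglongrightarrow> y"
    and "(\<lambda>k. real (Suc (grid_index k y)) / real (Suc k)) \<longlonglongrightarrow> y"
proof -
  have mesh: "(\<lambda>k. 1 / real (Suc k)) \<longlonglongrightarrow> 0"
    using LIMSEQ_inverse_real_of_nat by (simp add: inverse_eq_divide)
  have upper: "real (Suc (grid_index k y)) / real (Suc k) = real (grid_index k y) / real (Suc k) + 1 / real (Suc k)" for k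
    by (simp add: add_divide_distrib)
  have cell: "real (grid_index k y) / real (Suc k) \<le> y"
    "y - 1 / real (Suc k) < real (grid_index k y) / real (Suc k)" for k
    using grid_index_iff[OF assms, of "grid_index k y" k] unfolding upper by simp_all
  have lower_bound_lim: "(\<lambda>k. y - 1 / real (Suc k)) \<longlonglongrightarrow> y"
    using tendsto_diff[OF tendsto_const mesh] by simp
  show lower_lim: "(\<lambda>k. real (grid_index k y) / real (Suc k)) \<longlonglongrightarrow> y"
    by (rule tendsto_sandwich[OF _ _ lower_bound_lim tendsto_const]) (use cell in \<open>auto intro!: always_eventually less_imp_le\<close>)
  show "(\<lambda>k. real (Suc (grid_index k y)) / real (Suc k)) \<longlonglongrightarrow> y"
    unfolding upper using tendsto_add[OF lower_lim mesh] by simp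
qed

lemma nn_integral_renewal_measure:
  assumes "sigma_finite_measure P" and X: "\<And>n. X n \<in> borel_measurable P"
    and f: "f \<in> borel_measurable borel"
  shows "(\<integral>\<^sup>+ s. f s \<partial>renewal_measure P X) = (\<Sum>n. \<integral>\<^sup>+\<omega>. f (X (2 * Suc n) \<omega>) \<partial>P)"
proof -
  interpret sigma_finite_measure P by fact
  define h where "h = (\<lambda>(n, \<omega>). X (2 * Suc n) \<omega>)"
  define Q where "Q = distr (count_space UNIV \<Otimes>\<^sub>M P) borel h"
  have hm: "h \<in> borel_measurable (count_space UNIV \<Otimes>\<^sub>M P)"
    unfolding h_def using X by measurable
  have "renewal_measure P X = measure_of UNIV (sets borel) (emeasure Q)"
    unfolding renewal_measure_def
  proof (rule measure_of_eq)
    fix B :: "real set" assume "B \<in> sigma_sets UNIV (sets borel)"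
    then have B: "B \<in> sets borel" by (metis sets.sigma_sets_eq space_borel)
    have "emeasure Q B = emeasure (count_space UNIV \<Otimes>\<^sub>M P) (h -` B \<inter> space (count_space UNIV \<Otimes>\<^sub>M P))"
      unfolding Q_def using hm B by (rule emeasure_distr)
    also have "\<dots> = (\<integral>\<^sup>+n. emeasure P (Pair n -` (h -` B \<inter> space (count_space UNIV \<Otimes>\<^sub>M P))) \<partial>count_space UNIV)"
      using measurable_sets[OF hm B] by (rule emeasure_pair_measure_alt)
    also have "\<dots> = (\<Sum>n. emeasure P {\<omega> \<in> space P. X (2 * Suc n) \<omega> \<in> B})"
      by (auto simp: nn_integral_count_space_nat h_def space_pair_measure
          intro!: suminf_cong arg_cong[where f="emeasure P"])
    finally show "(\<Sum>n. emeasure P {\<omega> \<in> space P. X (2 * Suc n) \<omega> \<in> B}) = emeasure Q B" ..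
  qed simp
  also have "\<dots> = Q"
    using measure_of_of_measure[of Q] by (simp add: Q_def)
  finally have "renewal_measure P X = Q" .
  then have "(\<integral>\<^sup>+ s. f s \<partial>renewal_measure P X) = (\<integral>\<^sup>+ p. f (h p) \<partial>(count_space UNIV \<Otimes>\<^sub>M P))"
    unfolding Q_def using hm f by (simp add: nn_integral_distr)
  also have "\<dots> = (\<integral>\<^sup>+ n. \<integral>\<^sup>+ \<omega>. f (h (n, \<omega>)) \<partial>P \<partial>count_space UNIV)"
    by (rule nn_integral_fst[symmetric]) (use hm f in measurable)
  also have "\<dots> = (\<Sum>n. \<integral>\<^sup>+\<omega>. f (X (2 * Suc n) \<omega>) \<partial>P)"
    by (simp add: nn_integral_count_space_nat h_def)
  finally show ?thesis .
qed

lemma age_excess_le_iff: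
  fixes X :: "nat \<Rightarrow> 'a \<Rightarrow> real" and t :: real and \<omega> :: 'a
  defines "N \<equiv> cyc_count X t \<omega>"
  assumes "x \<ge> 0" and "z \<ge> 0"
  shows "age X t \<omega> \<le> x \<and> excess X t \<omega> \<le> z \<longleftrightarrow>
    (t < X (Suc (2 * N)) \<omega> \<longrightarrow> t - x \<le> X (2 * N) \<omega> \<and> X (Suc (2 * N)) \<omega> \<le> t + z)"
  using assms by (auto simp: age_def excess_def N_def indicator_def)

lemma cyc_count_spec:
  assumes lim: "filterlim (\<lambda>n. X n \<omega>) at_top sequentially" and "X 0 \<omega> \<le> t"
  shows "X (2 * cyc_count X t \<omega>) \<omega> \<le> t"
    and "X (2 * m) \<omega> \<le> t \<Longrightarrow> m \<le> cyc_count X t \<omega>"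
proof -
  define K where "K = {n. X (2 * n) \<omega> \<le> t}"
  obtain n\<^sub>0 where n\<^sub>0: "\<And>n. n \<ge> n\<^sub>0 \<Longrightarrow> t + 1 \<le> X n \<omega>"
    using lim by (auto simp: filterlim_at_top eventually_sequentially)
  have "K \<subseteq> {..n\<^sub>0}"
  proof
    fix n assume "n \<in> K"
    then have "X (2 * n) \<omega> \<le> t" by (simp add: K_def)
    with n\<^sub>0[of "2 * n"] have "\<not> 2 * n \<ge> n\<^sub>0" by linarith
    then show "n \<in> {..n\<^sub>0}" by simp
  qed
  then have fin: "finite K" by (rule finite_subset) simp
  have "0 \<in> K" using \<open>X 0 \<omega> \<le> t\<close> by (simp add: K_def)
  then have N: "cyc_count X t \<omega> = Max K"
    unfolding cyc_count_def K_def[symmetric] using fin by (intro cSup_eq_Max) auto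
  show "X (2 * cyc_count X t \<omega>) \<omega> \<le> t"
  proof -
    have "Max K \<in> K" using Max_in[OF fin] \<open>0 \<in> K\<close> by blast
    then show ?thesis unfolding N by (simp add: K_def)
  qed
  show "X (2 * m) \<omega> \<le> t \<Longrightarrow> m \<le> cyc_count X t \<omega>"
    unfolding N using fin by (simp add: K_def)
qed

lemma cyc_count_eq_straddling_cycle:
  assumes lim: "filterlim (\<lambda>n. X n \<omega>) at_top sequentially"
    and mono: "\<And>n. X n \<omega> \<le> X (Suc n) \<omega>"
    and straddle: "X (2 * m) \<omega> \<le> t" "t < X (Suc (2 * m)) \<omega>"
  shows "cyc_count X t \<omega> = m"
proof -
  have le: "X i \<omega> \<le> X j \<omega>" if "i \<le> j" for i j
    using lift_Suc_mono_le[of "\<lambda>n. X n \<omega>"] mono that by blast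
  have X0: "X 0 \<omega> \<le> t" using le[of 0 "2 * m"] straddle by simp
  have "m \<le> cyc_count X t \<omega>" by (rule cyc_count_spec(2)[where X=X and \<omega>=\<omega>, OF lim X0 straddle(1)])
  moreover have "\<not> m < cyc_count X t \<omega>"
  proof
    assume "m < cyc_count X t \<omega>"
    then have "X (Suc (2 * m)) \<omega> \<le> X (2 * cyc_count X t \<omega>) \<omega>" by (intro le) simp
    then show False using cyc_count_spec(1)[where X=X and \<omega>=\<omega>, OF lim X0] straddle by simp
  qed
  ultimately show ?thesis by simp
qed

lemma straddling_cycle_unique:
  fixes X :: "nat \<Rightarrow> 'a \<Rightarrow> real"
  assumes mono: "\<And>n. X n \<omega> \<le> X (Suc n) \<omega>"
    and "X (2 * m) \<omega> \<le> t" "t < X (Suc (2 * m)) \<omega>"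
    and "X (2 * n) \<omega> \<le> t" "t < X (Suc (2 * n)) \<omega>"
  shows "m = n"
proof -
  have le: "X i \<omega> \<le> X j \<omega>" if "i \<le> j" for i j
    using lift_Suc_mono_le[of "\<lambda>n. X n \<omega>"] mono that by blast
  have "\<not> m < n" "\<not> n < m"
    using le[of "Suc (2 * m)" "2 * n"] le[of "Suc (2 * n)" "2 * m"] assms(2-5) by auto
  then show ?thesis by simp
qed

locale alternating_semi_markov = prob_space P for P :: "'a measure" +
  fixes X :: "nat \<Rightarrow> 'a \<Rightarrow> real" and GY GZ gY gZ :: "real \<Rightarrow> real \<Rightarrow> real"
  assumes measurable_X [measurable]: "\<And>n. X n \<in> borel_measurable P"
    and X_0: "\<And>\<omega>. \<omega> \<in> space P \<Longrightarrow> X 0 \<omega> = 0"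
    and X_mono: "\<And>n \<omega>. \<omega> \<in> space P \<Longrightarrow> X n \<omega> \<le> X (Suc n) \<omega>"
    and kernel_Y: "sm_kernel GY gY" and kernel_Z: "sm_kernel GZ gZ"
    and semi_markov: "\<And>n \<tau> A. \<tau> \<ge> 0 \<Longrightarrow> A \<in> sets (history P X n) \<Longrightarrow>
          measure P ({\<omega> \<in> space P. X (Suc n) \<omega> - X n \<omega> \<le> \<tau>} \<inter> A) =
          (\<integral>\<omega>\<in>A. (if even n then GY (X n \<omega>) \<tau> else GZ (X n \<omega>) \<tau>) \<partial>P)"
begin

definition phase_kernel :: "nat \<Rightarrow> real \<Rightarrow> real \<Rightarrow> real" where
  "phase_kernel n = (if even n then GY else GZ)"

definition phase_density :: "nat \<Rightarrow> real \<Rightarrow> real \<Rightarrow> real" where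
  "phase_density n = (if even n then gY else gZ)"

lemma sm_kernel_phase: "sm_kernel (phase_kernel n) (phase_density n)"
  using kernel_Y kernel_Z by (simp add: phase_kernel_def phase_density_def)

lemma X_nonneg: "\<omega> \<in> space P \<Longrightarrow> 0 \<le> X n \<omega>"
  by (induction n) (auto simp: X_0 intro: order_trans X_mono)

lemma X_le: "\<omega> \<in> space P \<Longrightarrow> m \<le> n \<Longrightarrow> X m \<omega> \<le> X n \<omega>"
  by (rule lift_Suc_mono_le[of "\<lambda>n. X n \<omega>"]) (auto intro: X_mono)

lemma measurable_phase_kernel [measurable]:
  "(\<lambda>\<omega>. phase_kernel n (X n \<omega>) (f \<omega>)) \<in> borel_measurable P" if "f \<in> borel_measurable P"
  using measurable_sm_kernel[OF sm_kernel_phase measurable_X that] X_nonneg by blast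

lemma sets_history:
  "sets (history P X n) = sigma_sets (space P) {X i -` B \<inter> space P | i B. i \<le> n \<and> B \<in> sets borel}"
  unfolding history_def by (rule sets_measure_of) auto

lemma history_subset: "A \<in> sets (history P X n) \<Longrightarrow> A \<in> sets P"
  unfolding sets_history by (erule sets.sigma_sets_subset[THEN subsetD, rotated]) auto

lemma vimage_in_history: "k \<le> n \<Longrightarrow> B \<in> sets borel \<Longrightarrow> X k -` B \<inter> space P \<in> sets (history P X n)"
  unfolding sets_history by (rule sigma_sets.Basic) auto

lemma space_in_history: "space P \<in> sets (history P X n)"
  unfolding sets_history by (rule sigma_sets_top)

text \<open>Negative \<open>\<tau>\<close>, excluded by the hypothesis, is trivial since increments are nonnegative.\<close>

lemma emeasure_increment_le:
  assumes A: "A \<in> sets (history P X n)"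
  shows "emeasure P ({\<omega> \<in> space P. X (Suc n) \<omega> - X n \<omega> \<le> \<tau>} \<inter> A) =
    (\<integral>\<^sup>+\<omega>. indicator A \<omega> * ennreal (phase_kernel n (X n \<omega>) \<tau>) \<partial>P)"
proof -
  have AP: "A \<in> sets P" using history_subset[OF A] .
  have G_bounds: "0 \<le> phase_kernel n (X n \<omega>) \<tau>" "phase_kernel n (X n \<omega>) \<tau> \<le> 1" if "\<omega> \<in> space P" for \<omega>
    using sm_kernel_nonneg[OF sm_kernel_phase] sm_kernel_le_1[OF sm_kernel_phase] X_nonneg[OF that] by auto
  have "measure P ({\<omega> \<in> space P. X (Suc n) \<omega> - X n \<omega> \<le> \<tau>} \<inter> A) =
      (\<integral>\<omega>. indicator A \<omega> * phase_kernel n (X n \<omega>) \<tau> \<partial>P)"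
  proof (cases "\<tau> \<ge> 0")
    case True
    then show ?thesis using semi_markov[OF True A] by (simp add: phase_kernel_def set_lebesgue_integral_def)
  next
    case False
    then have no_event: "{\<omega> \<in> space P. X (Suc n) \<omega> - X n \<omega> \<le> \<tau>} = {}"
      using X_mono[of _ n] by fastforce
    have "phase_kernel n (X n \<omega>) \<tau> = 0" if "\<omega> \<in> space P" for \<omega>
      using False sm_kernel_eq_0[OF sm_kernel_phase X_nonneg[OF that]] by simp
    then have "(\<integral>\<omega>. indicator A \<omega> * phase_kernel n (X n \<omega>) \<tau> \<partial>P) = 0"
      by (intro integral_eq_zero_AE AE_I2) simp
    then show ?thesis unfolding no_event by simp
  qed
  moreover have "integrable P (\<lambda>\<omega>. indicator A \<omega> * phase_kernel n (X n \<omega>) \<tau>)"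
    by (rule integrable_const_bound[where B=1]) (use AP G_bounds in \<open>auto simp: indicator_def\<close>)
  ultimately show ?thesis
    using G_bounds
    by (simp add: emeasure_eq_measure nn_integral_eq_integral indicator_mult_ennreal mult.commute)
qed

definition grid_cell :: "nat \<Rightarrow> nat \<Rightarrow> nat \<Rightarrow> 'a set" where
  "grid_cell n k j = X n -` {real j / real (Suc k) ..< real (Suc j) / real (Suc k)} \<inter> space P"

lemma grid_cell_in_history: "grid_cell n k j \<in> sets (history P X n)"
  unfolding grid_cell_def by (rule vimage_in_history) auto

lemma mem_grid_cell: "\<omega> \<in> grid_cell n k j \<longleftrightarrow> \<omega> \<in> space P \<and> j = grid_index k (X n \<omega>)"
  using grid_index_iff[OF X_nonneg] by (auto simp: grid_cell_def)

lemma measurable_grid_index [measurable]: "(\<lambda>\<omega>. grid_index k (X n \<omega>)) \<in> P \<rightarrow>\<^sub>M count_space UNIV"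
  unfolding grid_index_def by measurable

lemma nn_integral_sum_grid_cells:
  assumes A: "A \<in> sets P" and f: "\<And>j. f j \<in> borel_measurable P"
  shows "(\<Sum>j. \<integral>\<^sup>+\<omega>. indicator (A \<inter> grid_cell n k j) \<omega> * f j \<omega> \<partial>P) =
    (\<integral>\<^sup>+\<omega>. indicator A \<omega> * f (grid_index k (X n \<omega>)) \<omega> \<partial>P)"
proof -
  have cell: "A \<inter> grid_cell n k j \<in> sets P" for j
    using A history_subset[OF grid_cell_in_history] by blast
  have "(\<Sum>j. \<integral>\<^sup>+\<omega>. indicator (A \<inter> grid_cell n k j) \<omega> * f j \<omega> \<partial>P) =
      (\<integral>\<^sup>+\<omega>. (\<Sum>j. indicator (A \<inter> grid_cell n k j) \<omega> * f j \<omega>) \<partial>P)"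
    by (rule nn_integral_suminf[symmetric]) (use cell f in measurable)
  also have "\<dots> = (\<integral>\<^sup>+\<omega>. indicator A \<omega> * f (grid_index k (X n \<omega>)) \<omega> \<partial>P)"
  proof (rule nn_integral_cong)
    fix \<omega> assume "\<omega> \<in> space P"
    then have "(\<Sum>j. indicator (A \<inter> grid_cell n k j) \<omega> * f j \<omega>) =
        (\<Sum>j\<in>{grid_index k (X n \<omega>)}. indicator (A \<inter> grid_cell n k j) \<omega> * f j \<omega>)"
      by (intro suminf_finite) (auto simp: mem_grid_cell)
    with \<open>\<omega> \<in> space P\<close> show "(\<Sum>j. indicator (A \<inter> grid_cell n k j) \<omega> * f j \<omega>) =
        indicator A \<omega> * f (grid_index k (X n \<omega>)) \<omega>"
      by (simp add: indicator_def mem_grid_cell)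
  qed
  finally show ?thesis .
qed

lemma emeasure_sum_grid_cells:
  "S \<in> sets P \<Longrightarrow> emeasure P S = (\<Sum>j. emeasure P (S \<inter> grid_cell n k j))"
  using nn_integral_sum_grid_cells[of S "\<lambda>_ _. 1" n k] history_subset[OF grid_cell_in_history]
  by simp

lemma emeasure_next_le_upper_bound:
  assumes A: "A \<in> sets (history P X n)"
  shows "emeasure P ({\<omega> \<in> space P. X (Suc n) \<omega> \<le> c} \<inter> A) \<le>
    (\<integral>\<^sup>+\<omega>. indicator A \<omega> *
       ennreal (phase_kernel n (X n \<omega>) (c - real (grid_index k (X n \<omega>)) / real (Suc k))) \<partial>P)"
    (is "_ \<le> ?rhs")
proof -
  let ?S = "{\<omega> \<in> space P. X (Suc n) \<omega> \<le> c}"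
  let ?cell = "\<lambda>j. A \<inter> grid_cell n k j"
  have cell: "?cell j \<in> sets (history P X n)" for j
    using A grid_cell_in_history by blast
  have "emeasure P (?S \<inter> A) = (\<Sum>j. emeasure P (?S \<inter> ?cell j))"
    using emeasure_sum_grid_cells[of "?S \<inter> A"] history_subset[OF A] by (simp add: Int_assoc)
  also have "\<dots> \<le> (\<Sum>j. emeasure P ({\<omega> \<in> space P. X (Suc n) \<omega> - X n \<omega> \<le> c - real j / real (Suc k)} \<inter> ?cell j))"
    using history_subset[OF cell]
    by (intro suminf_le emeasure_mono) (auto simp: grid_cell_def)
  also have "\<dots> = (\<Sum>j. \<integral>\<^sup>+\<omega>. indicator (?cell j) \<omega> * ennreal (phase_kernel n (X n \<omega>) (c - real j / real (Suc k))) \<partial>P)"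
    using emeasure_increment_le[OF cell] by simp
  also have "\<dots> = ?rhs"
    by (rule nn_integral_sum_grid_cells) (use history_subset[OF A] in measurable)
  finally show ?thesis .
qed

lemma emeasure_next_less_lower_bound:
  assumes A: "A \<in> sets (history P X n)"
  shows "(\<integral>\<^sup>+\<omega>. indicator A \<omega> *
       ennreal (phase_kernel n (X n \<omega>) (c - real (Suc (grid_index k (X n \<omega>))) / real (Suc k))) \<partial>P)
    \<le> emeasure P ({\<omega> \<in> space P. X (Suc n) \<omega> < c} \<inter> A)"
    (is "?lhs \<le> _")
proof -
  let ?S = "{\<omega> \<in> space P. X (Suc n) \<omega> < c}"
  let ?cell = "\<lambda>j. A \<inter> grid_cell n k j"
  have cell: "?cell j \<in> sets (history P X n)" for j
    using A grid_cell_in_history by blast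
  have "?lhs = (\<Sum>j. \<integral>\<^sup>+\<omega>. indicator (?cell j) \<omega> * ennreal (phase_kernel n (X n \<omega>) (c - real (Suc j) / real (Suc k))) \<partial>P)"
    by (rule nn_integral_sum_grid_cells[symmetric]) (use history_subset[OF A] in measurable)
  also have "\<dots> = (\<Sum>j. emeasure P ({\<omega> \<in> space P. X (Suc n) \<omega> - X n \<omega> \<le> c - real (Suc j) / real (Suc k)} \<inter> ?cell j))"
    using emeasure_increment_le[OF cell] by simp
  also have "\<dots> \<le> (\<Sum>j. emeasure P (?S \<inter> ?cell j))"
    using history_subset[OF cell]
    by (intro suminf_le emeasure_mono) (auto simp: grid_cell_def)
  also have "\<dots> = emeasure P (?S \<inter> A)"
    using emeasure_sum_grid_cells[of "?S \<inter> A"] history_subset[OF A] by (simp add: Int_assoc)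
  finally show ?thesis .
qed

lemma emeasure_next_le_history:
  assumes A: "A \<in> sets (history P X n)"
  shows "emeasure P ({\<omega> \<in> space P. X (Suc n) \<omega> \<le> c} \<inter> A) =
      (\<integral>\<^sup>+\<omega>. indicator A \<omega> * ennreal (phase_kernel n (X n \<omega>) (c - X n \<omega>)) \<partial>P)"
    and "emeasure P ({\<omega> \<in> space P. X (Suc n) \<omega> < c} \<inter> A) =
      (\<integral>\<^sup>+\<omega>. indicator A \<omega> * ennreal (phase_kernel n (X n \<omega>) (c - X n \<omega>)) \<partial>P)"
proof -
  let ?F = "\<integral>\<^sup>+\<omega>. indicator A \<omega> * ennreal (phase_kernel n (X n \<omega>) (c - X n \<omega>)) \<partial>P"
  have AP: "A \<in> sets P" using history_subset[OF A] .
  have lim: "(\<lambda>k. \<integral>\<^sup>+\<omega>. indicator A \<omega> * ennreal (phase_kernel n (X n \<omega>) (c - real (f k \<omega>) / real (Suc k))) \<partial>P)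
      \<longlonglongrightarrow> ?F"
    if "\<And>k. f k \<in> P \<rightarrow>\<^sub>M count_space UNIV"
      "\<And>\<omega>. \<omega> \<in> space P \<Longrightarrow> (\<lambda>k. real (f k \<omega>) / real (Suc k)) \<longlonglongrightarrow> X n \<omega>" for f
    by (rule tendsto_nn_integral_sm_kernel[OF sm_kernel_phase finite_measure_axioms AP])
       (use that X_nonneg in \<open>auto intro!: tendsto_diff\<close>)
  have "emeasure P ({\<omega> \<in> space P. X (Suc n) \<omega> \<le> c} \<inter> A) \<le> ?F"
    using lim[of "\<lambda>k \<omega>. grid_index k (X n \<omega>)", OF measurable_grid_index tendsto_grid_index(1)[OF X_nonneg]]
    by (rule LIMSEQ_le_const) (assumption | intro exI[of _ 0] allI impI emeasure_next_le_upper_bound[OF A])+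
  moreover have "?F \<le> emeasure P ({\<omega> \<in> space P. X (Suc n) \<omega> < c} \<inter> A)"
    using lim[of "\<lambda>k \<omega>. Suc (grid_index k (X n \<omega>))",
        OF measurable_compose[OF measurable_grid_index measurable_count_space] tendsto_grid_index(2)[OF X_nonneg]]
    by (rule LIMSEQ_le_const2) (assumption | intro exI[of _ 0] allI impI emeasure_next_less_lower_bound[OF A])+
  moreover have "emeasure P ({\<omega> \<in> space P. X (Suc n) \<omega> < c} \<inter> A) \<le> emeasure P ({\<omega> \<in> space P. X (Suc n) \<omega> \<le> c} \<inter> A)"
    using AP by (intro emeasure_mono) auto
  ultimately show "emeasure P ({\<omega> \<in> space P. X (Suc n) \<omega> \<le> c} \<inter> A) = ?F"
    and "emeasure P ({\<omega> \<in> space P. X (Suc n) \<omega> < c} \<inter> A) = ?F"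
    by (blast intro: antisym order_trans)+
qed

lemma emeasure_history_diff_next_le:
  assumes A: "A \<in> sets (history P X n)"
  shows "emeasure P (A - {\<omega> \<in> space P. X (Suc n) \<omega> \<le> c}) =
    (\<integral>\<^sup>+\<omega>. indicator A \<omega> * ennreal (1 - phase_kernel n (X n \<omega>) (c - X n \<omega>)) \<partial>P)"
proof -
  let ?S = "{\<omega> \<in> space P. X (Suc n) \<omega> \<le> c}"
  let ?G = "\<lambda>\<omega>. phase_kernel n (X n \<omega>) (c - X n \<omega>)"
  have AP: "A \<in> sets P" using history_subset[OF A] .
  have "emeasure P (?S \<inter> A) + emeasure P (A - ?S) = emeasure P A"
    using AP by (subst plus_emeasure) (auto intro!: arg_cong[where f="emeasure P"])
  also have "\<dots> = (\<integral>\<^sup>+\<omega>. indicator A \<omega> * ennreal (?G \<omega>) + indicator A \<omega> * ennreal (1 - ?G \<omega>) \<partial>P)"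
  proof (subst nn_integral_indicator[OF AP, symmetric], rule nn_integral_cong)
    fix \<omega> assume "\<omega> \<in> space P"
    then have "0 \<le> ?G \<omega>" "?G \<omega> \<le> 1"
      using sm_kernel_nonneg[OF sm_kernel_phase] sm_kernel_le_1[OF sm_kernel_phase] X_nonneg by auto
    then have "ennreal (?G \<omega>) + ennreal (1 - ?G \<omega>) = 1"
      by (simp flip: ennreal_plus)
    then show "indicator A \<omega> = indicator A \<omega> * ennreal (?G \<omega>) + indicator A \<omega> * ennreal (1 - ?G \<omega>)"
      by (simp add: indicator_def)
  qed
  also have "\<dots> = emeasure P (?S \<inter> A) + (\<integral>\<^sup>+\<omega>. indicator A \<omega> * ennreal (1 - ?G \<omega>) \<partial>P)"
    using AP by (simp add: nn_integral_add emeasure_next_le_history(1)[OF A])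
  finally show ?thesis
    by (simp add: ennreal_add_left_cancel emeasure_eq_measure)
qed

lemma X_Suc_no_atom: "emeasure P {\<omega> \<in> space P. X (Suc n) \<omega> = c} = 0"
proof -
  let ?le = "{\<omega> \<in> space P. X (Suc n) \<omega> \<le> c}" and ?lt = "{\<omega> \<in> space P. X (Suc n) \<omega> < c}"
  have "{\<omega> \<in> space P. X (Suc n) \<omega> = c} = ?le - ?lt" by auto
  moreover have "emeasure P ?le = emeasure P ?lt"
    using emeasure_next_le_history[OF space_in_history, of n c] by (simp add: Int_absorb2)
  moreover have "prob (?le - ?lt) = prob ?le - prob ?lt"
    by (rule finite_measure_Diff) (measurable, measurable, auto)
  ultimately show ?thesis by (simp add: emeasure_eq_measure)
qed

lemma prob_X_1_le: "prob {\<omega> \<in> space P. X 1 \<omega> \<le> \<tau>} = GY 0 \<tau>"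
proof -
  have "emeasure P {\<omega> \<in> space P. X 1 \<omega> \<le> \<tau>} =
      emeasure P ({\<omega> \<in> space P. X (Suc 0) \<omega> - X 0 \<omega> \<le> \<tau>} \<inter> space P)"
    by (auto simp: X_0 intro!: arg_cong[where f="emeasure P"])
  also have "\<dots> = ennreal (GY 0 \<tau>)"
    using emeasure_increment_le[OF space_in_history]
    by (simp add: X_0 phase_kernel_def nn_integral_cong[where v="\<lambda>_. ennreal (GY 0 \<tau>)"] emeasure_space_1)
  finally show ?thesis
    using sm_kernel_nonneg[OF kernel_Y, of 0 \<tau>] by (simp add: emeasure_eq_measure)
qed

definition cycle_event :: "real set \<Rightarrow> real \<Rightarrow> nat \<Rightarrow> 'a set" where
  "cycle_event I c n = {\<omega> \<in> space P. X (2 * Suc n) \<omega> \<in> I \<and> c < X (Suc (2 * Suc n)) \<omega>}"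

lemma cycle_event_in_sets [measurable]:
  assumes "I \<in> sets borel"
  shows "cycle_event I c n \<in> sets P"
proof -
  have "cycle_event I c n = (X (2 * Suc n) -` I \<inter> space P) \<inter> {\<omega> \<in> space P. c < X (Suc (2 * Suc n)) \<omega>}"
    by (auto simp: cycle_event_def)
  also have "\<dots> \<in> sets P"
    by (intro sets.Int[OF measurable_sets[OF measurable_X assms]]) measurable
  finally show ?thesis .
qed

lemma cycle_event_straddles:
  assumes "\<omega> \<in> cycle_event I c n" and "I \<subseteq> {..s}" and "s \<le> c"
  shows "X (2 * Suc n) \<omega> \<le> s" and "s < X (Suc (2 * Suc n)) \<omega>"
  using assms by (auto simp: cycle_event_def)

lemma cycle_event_disjoint:
  assumes "I \<subseteq> {..s}" "s \<le> c" "I' \<subseteq> {..s}" "s \<le> c'" and "n \<noteq> m \<or> I \<inter> I' = {}"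
  shows "cycle_event I c n \<inter> cycle_event I' c' m = {}"
proof -
  have False if \<omega>: "\<omega> \<in> cycle_event I c n" "\<omega> \<in> cycle_event I' c' m" for \<omega>
  proof -
    have "\<omega> \<in> space P" using \<omega> by (simp add: cycle_event_def)
    have "Suc n = Suc m"
      using straddling_cycle_unique[of X \<omega>, OF X_mono[OF \<open>\<omega> \<in> space P\<close>]
          cycle_event_straddles[OF \<omega>(1) assms(1,2)] cycle_event_straddles[OF \<omega>(2) assms(3,4)]] .
    then show False using assms(5) \<omega> by (auto simp: cycle_event_def)
  qed
  then show ?thesis by blast
qed

lemma emeasure_cycle_event:
  assumes "I \<in> sets borel"
  shows "emeasure P (cycle_event I c n) =
    (\<integral>\<^sup>+\<omega>. indicator I (X (2 * Suc n) \<omega>) * ennreal (1 - GY (X (2 * Suc n) \<omega>) (c - X (2 * Suc n) \<omega>)) \<partial>P)"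
proof -
  let ?A = "X (2 * Suc n) -` I \<inter> space P"
  have "cycle_event I c n = ?A - {\<omega> \<in> space P. X (Suc (2 * Suc n)) \<omega> \<le> c}"
    by (auto simp: cycle_event_def)
  also have "emeasure P \<dots> = (\<integral>\<^sup>+\<omega>. indicator ?A \<omega> *
      ennreal (1 - phase_kernel (2 * Suc n) (X (2 * Suc n) \<omega>) (c - X (2 * Suc n) \<omega>)) \<partial>P)"
    by (rule emeasure_history_diff_next_le) (use assms in \<open>auto intro: vimage_in_history\<close>)
  finally show ?thesis
    by (auto simp: phase_kernel_def indicator_def intro!: nn_integral_cong)
qed

lemma nn_integral_renewal_eq_emeasure_cycle_events:
  assumes I: "I \<in> sets borel" "I \<subseteq> {0..c}"
  shows "(\<integral>\<^sup>+ s. indicator I s * ennreal (1 - GY s (c - s)) \<partial>renewal_measure P X) =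
    emeasure P (\<Union>n. cycle_event I c n)"
proof -
  have "(\<lambda>s. GY (max s 0) (c - s)) \<in> borel_measurable borel"
    by (rule measurable_sm_kernel[OF kernel_Y]) auto
  then have "(\<lambda>s. indicator I s * ennreal (1 - GY (max s 0) (c - s))) \<in> borel_measurable borel"
    using I(1) by measurable
  moreover have "indicator I s * ennreal (1 - GY (max s 0) (c - s)) = indicator I s * ennreal (1 - GY s (c - s))" for s
    using I by (cases "s \<in> I") (auto simp: max_def)
  ultimately have "(\<lambda>s. indicator I s * ennreal (1 - GY s (c - s))) \<in> borel_measurable borel"
    by simp
  then have "(\<integral>\<^sup>+ s. indicator I s * ennreal (1 - GY s (c - s)) \<partial>renewal_measure P X) =
      (\<Sum>n. emeasure P (cycle_event I c n))"
    by (simp add: nn_integral_renewal_measure[OF sigma_finite_measure_axioms measurable_X] emeasure_cycle_event I)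
  also have "\<dots> = emeasure P (\<Union>n. cycle_event I c n)"
  proof (rule suminf_emeasure)
    show "disjoint_family (cycle_event I c)"
      unfolding disjoint_family_on_def using I(2)
      by (intro ballI impI cycle_event_disjoint[of I c c I c]) auto
  qed (use I in auto)
  finally show ?thesis .
qed

lemma not_age_excess_le_iff:
  assumes \<omega>: "\<omega> \<in> space P" and lim: "filterlim (\<lambda>n. X n \<omega>) at_top sequentially"
    and no_atom: "\<And>n. X (2 * Suc n) \<omega> \<noteq> t - x"
    and x: "0 \<le> x" "x \<le> t" and z: "0 \<le> z"
  shows "\<not> (age X t \<omega> \<le> x \<and> excess X t \<omega> \<le> z) \<longleftrightarrow>
    (if x = t then t + z else t) < X 1 \<omega> \<or>
    (\<exists>n. \<omega> \<in> cycle_event {t - x<..t} (t + z) n) \<or> (\<exists>n. \<omega> \<in> cycle_event {0..t - x} t n)"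
proof -
  define N where "N = cyc_count X t \<omega>"
  have counted: "N = Suc n" if "\<omega> \<in> cycle_event I c n" "I \<subseteq> {..t}" "t \<le> c" for I c n
    unfolding N_def using cycle_event_straddles[OF that]
    by (intro cyc_count_eq_straddling_cycle[where X=X and \<omega>=\<omega>, OF lim X_mono[OF \<omega>]])
  have C: "\<omega> \<in> cycle_event {t - x<..t} (t + z) n \<Longrightarrow> N = Suc n" for n
    using counted[of "{t - x<..t}" "t + z" n] z by fastforce
  have D: "\<omega> \<in> cycle_event {0..t - x} t n \<Longrightarrow> N = Suc n" for n
    using counted[of "{0..t - x}" t n] x by fastforce
  have age_excess: "age X t \<omega> \<le> x \<and> excess X t \<omega> \<le> z \<longleftrightarrow>
      (t < X (Suc (2 * N)) \<omega> \<longrightarrow> t - x \<le> X (2 * N) \<omega> \<and> X (Suc (2 * N)) \<omega> \<le> t + z)"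
    unfolding N_def by (rule age_excess_le_iff[OF x(1) z])
  show ?thesis
  proof (cases N)
    case 0
    with C D have "\<omega> \<notin> cycle_event {t - x<..t} (t + z) n" "\<omega> \<notin> cycle_event {0..t - x} t n" for n
      by auto
    moreover have "age X t \<omega> \<le> x \<and> excess X t \<omega> \<le> z \<longleftrightarrow> (t < X 1 \<omega> \<longrightarrow> t \<le> x \<and> X 1 \<omega> \<le> t + z)"
      using age_excess 0 X_0[OF \<omega>] by simp
    ultimately show ?thesis using x z by (cases "x = t") auto
  next
    case (Suc k)
    have "X (2 * N) \<omega> \<le> t"
      unfolding N_def using x X_0[OF \<omega>] by (intro cyc_count_spec(1)[where X=X and \<omega>=\<omega>, OF lim]) simp
    then have "X 1 \<omega> \<le> t" using X_le[OF \<omega>, of 1 "2 * N"] Suc by simp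
    then have "\<not> (if x = t then t + z else t) < X 1 \<omega>" using z by auto
    moreover have "(\<exists>n. \<omega> \<in> cycle_event I c n) \<longleftrightarrow>
        X (2 * N) \<omega> \<in> I \<and> c < X (Suc (2 * N)) \<omega>"
      if "\<And>n. \<omega> \<in> cycle_event I c n \<Longrightarrow> N = Suc n" for I c
      using that Suc \<omega> by (auto simp: cycle_event_def)
    ultimately show ?thesis
      using age_excess C D \<open>X (2 * N) \<omega> \<le> t\<close> no_atom[of k] X_nonneg[OF \<omega>, of "2 * N"] Suc x z
      by auto
  qed
qed

lemma age_excess_event_in_sets:
  "{\<omega> \<in> space P. age X t \<omega> \<le> x \<and> excess X t \<omega> \<le> z} \<in> sets P"
proof -
  have [measurable]: "cyc_count X t \<in> P \<rightarrow>\<^sub>M count_space UNIV"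
    unfolding cyc_count_def by measurable
  show ?thesis unfolding age_def excess_def by measurable
qed

lemma AE_no_cycle_start_at: "AE \<omega> in P. \<forall>n. X (2 * Suc n) \<omega> \<noteq> c"
  unfolding AE_all_countable
proof
  fix n
  show "AE \<omega> in P. X (2 * Suc n) \<omega> \<noteq> c"
    using X_Suc_no_atom[of "Suc (2 * n)" c] by (intro AE_I'[where N="{\<omega> \<in> space P. X (Suc (Suc (2 * n))) \<omega> = c}"]) auto
qed

lemma X_1_le_of_cycle_event:
  assumes "\<omega> \<in> cycle_event I c n" and "I \<subseteq> {..s}"
  shows "X 1 \<omega> \<le> s"
proof -
  have "\<omega> \<in> space P" "X (2 * Suc n) \<omega> \<le> s" using assms by (auto simp: cycle_event_def)
  then show ?thesis using X_le[of \<omega> 1 "2 * Suc n"] by simp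
qed

lemma prob_X_1_gt: "prob {\<omega> \<in> space P. c < X 1 \<omega>} = 1 - GY 0 c"
proof -
  have "{\<omega> \<in> space P. c < X 1 \<omega>} = space P - {\<omega> \<in> space P. X 1 \<omega> \<le> c}" by auto
  moreover have "{\<omega> \<in> space P. X 1 \<omega> \<le> c} \<in> sets P" by measurable
  ultimately show ?thesis by (simp only: prob_compl prob_X_1_le)
qed

lemma prob_age_excess_le:
  assumes to_infty: "AE \<omega> in P. filterlim (\<lambda>n. X n \<omega>) at_top sequentially"
    and x: "0 \<le> x" "x \<le> t" and z: "0 \<le> z"
  shows "prob {\<omega> \<in> space P. age X t \<omega> \<le> x \<and> excess X t \<omega> \<le> z} =
     GY 0 t
     - enn2real (\<integral>\<^sup>+ s. indicator {t - x<..t} s * ennreal (1 - GY s (t + z - s)) \<partial>renewal_measure P X)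
     - enn2real (\<integral>\<^sup>+ s. indicator {0..t - x} s * ennreal (1 - GY s (t - s)) \<partial>renewal_measure P X)
     + (if x = t then GY 0 (t + z) - GY 0 t else 0)"
proof -
  define c where "c = (if x = t then t + z else t)"
  define F where "F = {\<omega> \<in> space P. c < X 1 \<omega>}"
  define C where "C = (\<Union>n. cycle_event {t - x<..t} (t + z) n)"
  define D where "D = (\<Union>n. cycle_event {0..t - x} t n)"
  have [measurable]: "F \<in> sets P" "C \<in> sets P" "D \<in> sets P"
    unfolding F_def C_def D_def by measurable
  have "AE \<omega> in P. \<omega> \<in> {\<omega> \<in> space P. age X t \<omega> \<le> x \<and> excess X t \<omega> \<le> z} \<longleftrightarrow>
      \<omega> \<in> space P - (F \<union> C \<union> D)"
    using to_infty AE_no_cycle_start_at[of "t - x"] AE_space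
  proof eventually_elim
    case (elim \<omega>)
    have "\<omega> \<in> F \<union> C \<union> D \<longleftrightarrow> \<not> (age X t \<omega> \<le> x \<and> excess X t \<omega> \<le> z)"
      unfolding not_age_excess_le_iff[OF elim(3,1) elim(2)[rule_format] x z]
      by (simp add: F_def C_def D_def c_def elim(3))
    with elim(3) show ?case by blast
  qed
  then have "prob {\<omega> \<in> space P. age X t \<omega> \<le> x \<and> excess X t \<omega> \<le> z} = prob (space P - (F \<union> C \<union> D))"
    by (rule measure_eq_AE) (simp_all add: age_excess_event_in_sets sets.Diff)
  also have "\<dots> = 1 - prob (F \<union> C \<union> D)"
    by (rule prob_compl) simp
  also have "prob (F \<union> C \<union> D) = prob F + prob C + prob D"
  proof -
    have "t \<le> c" using z by (simp add: c_def)
    then have "F \<inter> (C \<union> D) = {}"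
      using x X_1_le_of_cycle_event[of _ "{t - x<..t}" "t + z" _ t] X_1_le_of_cycle_event[of _ "{0..t - x}" t _ t]
      by (fastforce simp: F_def C_def D_def)
    moreover have "cycle_event {t - x<..t} (t + z) n \<inter> cycle_event {0..t - x} t m = {}" for n m
      by (rule cycle_event_disjoint[where s=t]) (use x z in auto)
    then have "C \<inter> D = {}" by (auto simp: C_def D_def)
    ultimately show ?thesis by (simp add: finite_measure_Union Int_Un_distrib Int_Un_distrib2)
  qed
  also have "prob F = 1 - GY 0 c"
    unfolding F_def by (rule prob_X_1_gt)
  also have "prob C = enn2real (\<integral>\<^sup>+ s. indicator {t - x<..t} s * ennreal (1 - GY s (t + z - s)) \<partial>renewal_measure P X)"
    using x z by (subst nn_integral_renewal_eq_emeasure_cycle_events) (auto simp: C_def measure_def)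
  also have "prob D = enn2real (\<integral>\<^sup>+ s. indicator {0..t - x} s * ennreal (1 - GY s (t - s)) \<partial>renewal_measure P X)"
    using x by (subst nn_integral_renewal_eq_emeasure_cycle_events) (auto simp: D_def measure_def)
  finally show ?thesis by (simp add: c_def)
qed

end

theorem proposition3:
  fixes P :: "'a measure" and X :: "nat \<Rightarrow> 'a \<Rightarrow> real"
    and GY GZ gY gZ :: "real \<Rightarrow> real \<Rightarrow> real"
  assumes "prob_space P"
    and meas: "\<And>n. X n \<in> borel_measurable P"
    and X0: "\<And>\<omega>. \<omega> \<in> space P \<Longrightarrow> X 0 \<omega> = 0"
    and mono: "\<And>n \<omega>. \<omega> \<in> space P \<Longrightarrow> X n \<omega> \<le> X (Suc n) \<omega>"
    and kY: "sm_kernel GY gY" and kZ: "sm_kernel GZ gZ"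
    and semi_markov: "\<And>n \<tau> A. \<tau> \<ge> 0 \<Longrightarrow> A \<in> sets (history P X n) \<Longrightarrow>
          measure P ({\<omega> \<in> space P. X (Suc n) \<omega> - X n \<omega> \<le> \<tau>} \<inter> A) =
          (\<integral>\<omega>\<in>A. (if even n then GY (X n \<omega>) \<tau> else GZ (X n \<omega>) \<tau>) \<partial>P)"
    and to_infty: "AE \<omega> in P. filterlim (\<lambda>n. X n \<omega>) at_top sequentially"
    and t: "t \<ge> 0" and x: "0 \<le> x" "x \<le> t" and z: "z \<ge> 0"
  shows "measure P {\<omega> \<in> space P. age X t \<omega> \<le> x \<and> excess X t \<omega> \<le> z} =
     GY 0 t
     - enn2real (\<integral>\<^sup>+ s. indicator {t - x<..t} s * ennreal (1 - GY s (t + z - s)) \<partial>renewal_measure P X)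
     - enn2real (\<integral>\<^sup>+ s. indicator {0..t - x} s * ennreal (1 - GY s (t - s)) \<partial>renewal_measure P X)
     + (if x = t then GY 0 (t + z) - GY 0 t else 0)"
proof -
  interpret alternating_semi_markov P X GY GZ gY gZ
    by (intro alternating_semi_markov.intro alternating_semi_markov_axioms.intro) (fact assms)+
  show ?thesis by (rule prob_age_excess_le[OF to_infty x z])
qed

end
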